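(* Let $0<\alpha\le\beta<\infty$ and $\varphi\in\mathcal{K}(\alpha,\beta)$. Then for all $a,b\in\mathbb{C}\setminus\{0\}$: (i) if $\beta\le1$, then $|\varphi(|a|)\mathrm{sign}(a)-\varphi(|b|)\mathrm{sign}(b)|\le\varphi(|a-b|)+4\frac{|a-b|}{|a|+|b|}\varphi(|a|+|b|)$; (ii) if $\beta\ge1$, then $|\varphi(|a|)\mathrm{sign}(a)-\varphi(|b|)\mathrm{sign}(b)|\le(2\beta+4)\frac{|a-b|}{|a|+|b|}\varphi(|a|+|b|)$.
   Context: For $0<\alpha\le\beta<\infty$, a non-decreasing continuous function $\varphi:[0,\infty)\to[0,\infty)$ with $\varphi(0)=0$ is in the class $\mathcal{K}(\alpha,\beta)$ if $\varphi(t)/t^\alpha$ is non-decreasing and $\varphi(t)/t^\beta$ is non-increasing on $t>0$. For $a\in\mathbb{C}\setminus\{0\}$, $\mathrm{sign}(a)=a/|a|$. *)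

theory Defs
  imports "HOL-Analysis.Analysis"
begin

definition classK :: "real \<Rightarrow> real \<Rightarrow> (real \<Rightarrow> real) \<Rightarrow> bool" where
  "classK \<alpha> \<beta> \<phi> \<longleftrightarrow>
     mono_on {0..} \<phi> \<and> continuous_on {0..} \<phi> \<and> \<phi> 0 = 0 \<and> (\<forall>t\<ge>0. \<phi> t \<ge> 0) \<and>
     mono_on {0<..} (\<lambda>t. \<phi> t / t powr \<alpha>) \<and>
     antimono_on {0<..} (\<lambda>t. \<phi> t / t powr \<beta>)"

end

theory Submission
  imports Defs
begin

text \<open>
  With \<open>|b| \<le> |a|\<close> write
  \<open>\<phi>(|a|) sgn a - \<phi>(|b|) sgn b = (\<phi>(|a|) - \<phi>(|b|)) sgn a + \<phi>(|b|) (sgn a - sgn b)\<close>.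
  The second term is controlled by the Dunkl--Williams inequality
  \<open>|sgn a - sgn b| \<le> 2 |a - b| / (|a| + |b|)\<close>. For the first term: if \<open>\<beta> \<le> 1\<close> then
  \<open>\<phi>(t)/t\<close> is non-increasing, so \<open>\<phi>\<close> is subadditive and \<open>\<phi>(|a|) - \<phi>(|b|) \<le> \<phi>(|a| - |b|)\<close>;
  if \<open>\<beta> \<ge> 1\<close>, comparing \<open>\<phi>\<close> with \<open>t\<^sup>\<beta>\<close> and using Bernoulli's inequality gives
  \<open>\<phi>(|a|) - \<phi>(|b|) \<le> \<beta> (|a| - |b|)/|b| \<phi>(|a|)\<close>, which together with the trivial bound
  \<open>\<phi>(|a| + |b|)\<close> is at most \<open>(2\<beta> + 2) (|a| - |b|)/(|a| + |b|) \<phi>(|a| + |b|)\<close>.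
\<close>

lemma classK_mono: "classK \<alpha> \<beta> \<phi> \<Longrightarrow> 0 \<le> x \<Longrightarrow> x \<le> y \<Longrightarrow> \<phi> x \<le> \<phi> y"
  unfolding classK_def monotone_on_def by auto

lemma classK_nonneg: "classK \<alpha> \<beta> \<phi> \<Longrightarrow> 0 \<le> x \<Longrightarrow> 0 \<le> \<phi> x"
  unfolding classK_def by auto

lemma classK_powr_ratio_le:
  assumes "classK \<alpha> \<beta> \<phi>" and "0 < x" and "x \<le> y"
  shows "(x / y) powr \<beta> * \<phi> y \<le> \<phi> x"
proof -
  have y: "0 < y" using assms by linarith
  have "\<phi> y / y powr \<beta> \<le> \<phi> x / x powr \<beta>"
    using assms y unfolding classK_def monotone_on_def by auto
  then show ?thesis
    using assms(2) y by (simp add: powr_divide field_simps)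
qed

lemma classK_ratio_le:
  assumes "classK \<alpha> \<beta> \<phi>" and "\<beta> \<le> 1" and "0 < x" and "x \<le> y"
  shows "x / y * \<phi> y \<le> \<phi> x"
proof -
  have "x / y \<le> (x / y) powr \<beta>"
    using powr_mono'[of \<beta> 1 "x / y"] assms by simp
  moreover have "0 \<le> \<phi> y"
    using assms(3,4) by (intro classK_nonneg[OF assms(1)]) simp
  ultimately have "x / y * \<phi> y \<le> (x / y) powr \<beta> * \<phi> y"
    by (rule mult_right_mono)
  with classK_powr_ratio_le[OF assms(1,3,4)] show ?thesis by linarith
qed

lemma classK_subadditive:
  assumes "classK \<alpha> \<beta> \<phi>" and "\<beta> \<le> 1" and "0 < x" and "0 < y"
  shows "\<phi> (x + y) \<le> \<phi> x + \<phi> y"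
proof -
  have "x / (x + y) + y / (x + y) = 1"
    using assms by (simp add: add_divide_distrib[symmetric])
  then have "\<phi> (x + y) = (x / (x + y) + y / (x + y)) * \<phi> (x + y)"
    by simp
  also have "\<dots> = x / (x + y) * \<phi> (x + y) + y / (x + y) * \<phi> (x + y)"
    by (rule distrib_right)
  also have "\<dots> \<le> \<phi> x + \<phi> y"
    by (intro add_mono classK_ratio_le; use assms in simp)
  finally show ?thesis .
qed

lemma classK_diff_le_sublinear:
  assumes "classK \<alpha> \<beta> \<phi>" and "\<beta> \<le> 1" and "0 < s" and "s \<le> r" and "r - s \<le> d"
  shows "\<phi> r - \<phi> s \<le> \<phi> d"
proof (cases "s = r")
  case True
  then show ?thesis using assms by (simp add: classK_nonneg[OF assms(1)])
next
  case False
  then have "\<phi> r \<le> \<phi> s + \<phi> (r - s)"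
    using classK_subadditive[OF assms(1,2,3), of "r - s"] assms(4) by simp
  moreover have "\<phi> (r - s) \<le> \<phi> d"
    using assms by (intro classK_mono[OF assms(1)]) auto
  ultimately show ?thesis by linarith
qed

lemma one_sub_le_powr_ratio:
  fixes r s \<beta> :: real
  assumes "0 < s" and "s \<le> r" and "0 \<le> \<beta>"
  shows "1 - \<beta> * ((r - s) / s) \<le> (s / r) powr \<beta>"
proof -
  have "ln (s / r) = - ln (r / s)"
    using assms by (simp add: ln_div)
  also have "- ln (r / s) \<ge> - ((r - s) / s)"
    using ln_le_minus_one[of "r / s"] assms by (simp add: diff_divide_distrib)
  finally have "\<beta> * - ((r - s) / s) \<le> \<beta> * ln (s / r)"
    using assms(3) by (rule mult_left_mono)
  then have "1 - \<beta> * ((r - s) / s) \<le> 1 + \<beta> * ln (s / r)"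
    by simp
  also have "\<dots> \<le> exp (\<beta> * ln (s / r))"
    by (rule exp_ge_add_one_self)
  also have "\<dots> = (s / r) powr \<beta>"
    using assms by (simp add: powr_def)
  finally show ?thesis .
qed

lemma min_one_le_ratio:
  fixes r s \<beta> :: real
  assumes "0 < s" and "s \<le> r" and "0 \<le> \<beta>"
  shows "min 1 (\<beta> * ((r - s) / s)) \<le> (2 * \<beta> + 2) * ((r - s) / (r + s))"
proof -
  define t where "t = (r - s) / s"
  have t: "0 \<le> t" using assms by (simp add: t_def)
  have "2 + t = (r + s) / s"
    using assms by (simp add: t_def field_simps)
  then have ratio: "(r - s) / (r + s) = t / (2 + t)"
    using assms by (simp add: t_def)
  have "min 1 (\<beta> * t) * (2 + t) \<le> (2 * \<beta> + 2) * t"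
  proof (cases "\<beta> * t \<le> 1")
    case True
    then have "\<beta> * t * t \<le> t" using t mult_right_mono by fastforce
    then show ?thesis using True t by (simp add: algebra_simps)
  next
    case False
    then show ?thesis using t by (simp add: algebra_simps)
  qed
  then have "min 1 (\<beta> * t) \<le> (2 * \<beta> + 2) * (t / (2 + t))"
    using t by (simp add: pos_le_divide_eq)
  then show ?thesis
    unfolding ratio t_def[symmetric] .
qed

lemma classK_diff_le_linear:
  assumes "classK \<alpha> \<beta> \<phi>" and "0 \<le> \<beta>" and "0 < s" and "s \<le> r"
  shows "\<phi> r - \<phi> s \<le> \<beta> * ((r - s) / s) * \<phi> r"
proof -
  have "(1 - \<beta> * ((r - s) / s)) * \<phi> r \<le> (s / r) powr \<beta> * \<phi> r"
    using assms by (intro mult_right_mono one_sub_le_powr_ratio classK_nonneg[OF assms(1)]) auto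
  with classK_powr_ratio_le[OF assms(1,3,4)] show ?thesis
    by (simp add: algebra_simps)
qed

lemma classK_diff_le_superlinear:
  assumes "classK \<alpha> \<beta> \<phi>" and "0 \<le> \<beta>" and "0 < s" and "s \<le> r"
  shows "\<phi> r - \<phi> s \<le> (2 * \<beta> + 2) * ((r - s) / (r + s)) * \<phi> (r + s)"
proof -
  have mono: "\<phi> r \<le> \<phi> (r + s)" "0 \<le> \<phi> s" "0 \<le> \<phi> r"
    using assms by (auto intro: classK_mono[OF assms(1)] classK_nonneg[OF assms(1)])
  have "\<phi> r - \<phi> s \<le> min 1 (\<beta> * ((r - s) / s)) * \<phi> r"
    using classK_diff_le_linear[OF assms] mono by (simp add: min_def)
  also have "\<dots> \<le> (2 * \<beta> + 2) * ((r - s) / (r + s)) * \<phi> r"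
    using min_one_le_ratio[OF assms(3,4,2)] mono(3) by (rule mult_right_mono)
  also have "\<dots> \<le> (2 * \<beta> + 2) * ((r - s) / (r + s)) * \<phi> (r + s)"
    using assms mono by (intro mult_left_mono) auto
  finally show ?thesis .
qed

lemma norm_sgn_diff_le:
  fixes a b :: "'a::real_inner"
  assumes "a \<noteq> 0" and "b \<noteq> 0"
  shows "norm (sgn a - sgn b) \<le> 2 * (norm (a - b) / (norm a + norm b))"
proof -
  define r s p where "r = norm a" and "s = norm b" and "p = inner a b"
  have rs: "0 < r" "0 < s" using assms by (simp_all add: r_def s_def)
  have "\<bar>p\<bar> \<le> r * s"
    unfolding p_def r_def s_def by (rule Cauchy_Schwarz_ineq2)
  then have p: "0 \<le> r * s + p" by linarith
  have "inner (sgn a) (sgn a) = 1" "inner (sgn b) (sgn b) = 1"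
    using assms by (simp_all flip: power2_norm_eq_inner add: norm_sgn)
  moreover have "inner (sgn a) (sgn b) = p / (r * s)"
    unfolding sgn_div_norm p_def r_def s_def by (simp add: field_simps)
  ultimately have "(norm (sgn a - sgn b))\<^sup>2 = 2 - 2 * p / (r * s)"
    by (simp add: power2_norm_eq_inner inner_diff inner_commute)
  then have sgn_sq: "(norm (sgn a - sgn b))\<^sup>2 * (r * s) = 2 * (r * s - p)"
    using rs by (simp add: field_simps)
  have diff_sq: "(norm (a - b))\<^sup>2 = r\<^sup>2 + s\<^sup>2 - 2 * p"
    unfolding power2_norm_eq_inner r_def s_def p_def by (simp add: inner_diff inner_commute)
  have "(norm (sgn a - sgn b) * (r + s))\<^sup>2 * (r * s) \<le> (2 * norm (a - b))\<^sup>2 * (r * s)"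
  proof -
    have "(2 * norm (a - b))\<^sup>2 * (r * s) - (norm (sgn a - sgn b) * (r + s))\<^sup>2 * (r * s)
          = 4 * (norm (a - b))\<^sup>2 * (r * s) - (norm (sgn a - sgn b))\<^sup>2 * (r * s) * (r + s)\<^sup>2"
      by (simp add: power_mult_distrib)
    also have "\<dots> = 4 * (r\<^sup>2 + s\<^sup>2 - 2 * p) * (r * s) - 2 * (r * s - p) * (r + s)\<^sup>2"
      by (simp only: sgn_sq diff_sq)
    also have "\<dots> = 2 * (r - s)\<^sup>2 * (r * s + p)"
      by (simp add: algebra_simps power2_eq_square)
    finally have "(2 * norm (a - b))\<^sup>2 * (r * s) - (norm (sgn a - sgn b) * (r + s))\<^sup>2 * (r * s)
        = 2 * (r - s)\<^sup>2 * (r * s + p)" .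
    moreover have "0 \<le> 2 * (r - s)\<^sup>2 * (r * s + p)"
      using p by simp
    ultimately show ?thesis by linarith
  qed
  then have "(norm (sgn a - sgn b) * (r + s))\<^sup>2 \<le> (2 * norm (a - b))\<^sup>2"
    using rs by simp
  then have "norm (sgn a - sgn b) * (r + s) \<le> 2 * norm (a - b)"
    by (rule power2_le_imp_le) simp
  then have "norm (sgn a - sgn b) \<le> 2 * norm (a - b) / (r + s)"
    using rs by (simp add: pos_le_divide_eq)
  then show ?thesis
    by (simp add: r_def s_def)
qed

lemma norm_scaled_sgn_diff_le:
  fixes a b :: complex and u v :: real
  assumes "a \<noteq> 0" and "b \<noteq> 0" and "0 \<le> v"
  shows "cmod (of_real u * sgn a - of_real v * sgn b)
    \<le> \<bar>u - v\<bar> + 2 * (cmod (a - b) / (cmod a + cmod b)) * v"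
proof -
  have "of_real u * sgn a - of_real v * sgn b = of_real (u - v) * sgn a + of_real v * (sgn a - sgn b)"
    by (simp add: algebra_simps)
  then have "cmod (of_real u * sgn a - of_real v * sgn b) \<le> \<bar>u - v\<bar> + v * cmod (sgn a - sgn b)"
    using norm_triangle_ineq[of "of_real (u - v) * sgn a" "of_real v * (sgn a - sgn b)"] assms
    by (simp add: norm_mult norm_sgn flip: of_real_diff)
  also have "\<dots> \<le> \<bar>u - v\<bar> + v * (2 * (cmod (a - b) / (cmod a + cmod b)))"
    using norm_sgn_diff_le[OF assms(1,2)] assms(3) by (intro add_left_mono mult_left_mono)
  finally show ?thesis by (simp add: mult.commute)
qed

lemma classK_sgn_diff_le:
  fixes a b :: complex
  assumes "classK \<alpha> \<beta> \<phi>" and "b \<noteq> 0" and "cmod b \<le> cmod a"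
  shows "cmod (of_real (\<phi> (cmod a)) * sgn a - of_real (\<phi> (cmod b)) * sgn b)
    \<le> \<phi> (cmod a) - \<phi> (cmod b) + 2 * (cmod (a - b) / (cmod a + cmod b)) * \<phi> (cmod a + cmod b)"
proof -
  have "a \<noteq> 0" using assms(2,3) by auto
  have mono: "\<phi> (cmod b) \<le> \<phi> (cmod a)" "\<phi> (cmod b) \<le> \<phi> (cmod a + cmod b)" "0 \<le> \<phi> (cmod b)"
    using assms by (auto intro: classK_mono[OF assms(1)] classK_nonneg[OF assms(1)])
  have "0 \<le> 2 * (cmod (a - b) / (cmod a + cmod b))" by simp
  with mono(2) have "2 * (cmod (a - b) / (cmod a + cmod b)) * \<phi> (cmod b)
      \<le> 2 * (cmod (a - b) / (cmod a + cmod b)) * \<phi> (cmod a + cmod b)"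
    by (rule mult_left_mono)
  with norm_scaled_sgn_diff_le[OF \<open>a \<noteq> 0\<close> assms(2) mono(3), where u = "\<phi> (cmod a)"] mono(1)
  show ?thesis by linarith
qed

lemma classK_sgn_diff_le_sublinear:
  fixes a b :: complex
  assumes "classK \<alpha> \<beta> \<phi>" and "\<beta> \<le> 1" and "b \<noteq> 0" and "cmod b \<le> cmod a"
  shows "cmod (of_real (\<phi> (cmod a)) * sgn a - of_real (\<phi> (cmod b)) * sgn b)
    \<le> \<phi> (cmod (a - b)) + 4 * (cmod (a - b) / (cmod a + cmod b)) * \<phi> (cmod a + cmod b)"
proof -
  have "\<phi> (cmod a) - \<phi> (cmod b) \<le> \<phi> (cmod (a - b))"
    using assms norm_triangle_ineq2[of a b] by (intro classK_diff_le_sublinear[OF assms(1,2)]) auto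
  moreover have "0 \<le> cmod (a - b) / (cmod a + cmod b) * \<phi> (cmod a + cmod b)"
    by (simp add: classK_nonneg[OF assms(1)])
  ultimately show ?thesis
    using classK_sgn_diff_le[OF assms(1,3,4)] by linarith
qed

lemma classK_sgn_diff_le_superlinear:
  fixes a b :: complex
  assumes "classK \<alpha> \<beta> \<phi>" and "1 \<le> \<beta>" and "b \<noteq> 0" and "cmod b \<le> cmod a"
  shows "cmod (of_real (\<phi> (cmod a)) * sgn a - of_real (\<phi> (cmod b)) * sgn b)
    \<le> (2 * \<beta> + 4) * (cmod (a - b) / (cmod a + cmod b)) * \<phi> (cmod a + cmod b)"
proof -
  have "\<phi> (cmod a) - \<phi> (cmod b)
      \<le> (2 * \<beta> + 2) * ((cmod a - cmod b) / (cmod a + cmod b)) * \<phi> (cmod a + cmod b)"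
    using assms by (intro classK_diff_le_superlinear[OF assms(1)]) auto
  also have "\<dots> \<le> (2 * \<beta> + 2) * (cmod (a - b) / (cmod a + cmod b)) * \<phi> (cmod a + cmod b)"
    using assms norm_triangle_ineq2[of a b]
    by (intro mult_right_mono mult_left_mono divide_right_mono classK_nonneg[OF assms(1)]) auto
  moreover have "(2 * \<beta> + 4) * (cmod (a - b) / (cmod a + cmod b)) * \<phi> (cmod a + cmod b)
      = (2 * \<beta> + 2) * (cmod (a - b) / (cmod a + cmod b)) * \<phi> (cmod a + cmod b)
        + 2 * (cmod (a - b) / (cmod a + cmod b)) * \<phi> (cmod a + cmod b)"
    by (simp only: distrib_right [symmetric]) simp
  ultimately show ?thesis
    using classK_sgn_diff_le[OF assms(1,3,4)] by linarith
qed

lemma classK_sgn_diff_bounds: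
  fixes a b :: complex
  assumes "classK \<alpha> \<beta> \<phi>" and "b \<noteq> 0" and "cmod b \<le> cmod a"
  shows "(\<beta> \<le> 1 \<longrightarrow>
           cmod (of_real (\<phi> (cmod a)) * sgn a - of_real (\<phi> (cmod b)) * sgn b)
             \<le> \<phi> (cmod (a - b)) + 4 * (cmod (a - b) / (cmod a + cmod b)) * \<phi> (cmod a + cmod b))
       \<and> (1 \<le> \<beta> \<longrightarrow>
           cmod (of_real (\<phi> (cmod a)) * sgn a - of_real (\<phi> (cmod b)) * sgn b)
             \<le> (2 * \<beta> + 4) * (cmod (a - b) / (cmod a + cmod b)) * \<phi> (cmod a + cmod b))"
  by (intro conjI impI classK_sgn_diff_le_sublinear[OF assms(1) _ assms(2,3)]
      classK_sgn_diff_le_superlinear[OF assms(1) _ assms(2,3)])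

theorem mainTheorem9:
  fixes \<alpha> \<beta> :: real and \<phi> :: "real \<Rightarrow> real" and a b :: complex
  assumes "0 < \<alpha>" and "\<alpha> \<le> \<beta>" and "classK \<alpha> \<beta> \<phi>"
    and "a \<noteq> 0" and "b \<noteq> 0"
  shows "(\<beta> \<le> 1 \<longrightarrow>
           cmod (complex_of_real (\<phi> (cmod a)) * sgn a - complex_of_real (\<phi> (cmod b)) * sgn b)
             \<le> \<phi> (cmod (a - b)) + 4 * (cmod (a - b) / (cmod a + cmod b)) * \<phi> (cmod a + cmod b))
       \<and> (1 \<le> \<beta> \<longrightarrow>
           cmod (complex_of_real (\<phi> (cmod a)) * sgn a - complex_of_real (\<phi> (cmod b)) * sgn b)
             \<le> (2 * \<beta> + 4) * (cmod (a - b) / (cmod a + cmod b)) * \<phi> (cmod a + cmod b))"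
proof (cases "cmod b \<le> cmod a")
  case True
  then show ?thesis by (rule classK_sgn_diff_bounds[OF assms(3,5)])
next
  case False
  then have "cmod a \<le> cmod b" by simp
  from classK_sgn_diff_bounds[OF assms(3,4) this] show ?thesis
    by (simp only: norm_minus_commute[of b a] add.commute[of "cmod b"]
        norm_minus_commute[of "of_real (\<phi> (cmod b)) * sgn b"])
qed

end
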